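(* Let $f(r)=r$ and $q_0\notin\Sigma$. For every initial covector $$\lambda_0\in E_1^*:=E_1\setminus(\{K=0\}\cup\{L=0\}\cup\{w_0=0\}),$$ the unit-speed normal trajectory $\gamma(\cdot;\lambda_0)$ from $q_0$ has first conjugate time $t_{\mathrm{con}}=\pi/|w_0|$.
   Context: Consider $\mathbb R^3$ with points $q=(x,y,z)$, $r=\sqrt{x^2+y^2}$, $\Sigma=\{r=0\}$, and $f(r)=r$. Let $q_0=(x_0,y_0,z_0)$ and $r_0=\sqrt{x_0^2+y_0^2}$. Normal trajectories are projections of solutions of $$\dot x=u,\quad \dot y=v,\quad \dot z=r^2w,\quad \dot u=-w^2x,\quad \dot v=-w^2y,\quad \dot w=0,$$ with initial covector $\lambda_0=(u_0,v_0,w_0)$. Energy shell and coordinates: - $E_1=\{\lambda_0:u_0^2+v_0^2+r_0^2w_0^2=1\}$ is the unit energy shell. - $K=x_0v_0-y_0u_0$ and $L=x_0u_0+y_0v_0$. Exponential map and conjugate time: - $\mathrm{Exp}_{q_0}(\lambda_0)=\gamma(1;\lambda_0)$. - $t_{\mathrm{con}}(\gamma)=\inf\{t>0:\mathrm{Exp}_{q_0}\text{ has a critical point at }t\lambda_0\}$. *)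

theory Defs
  imports "HOL-Analysis.Analysis"
begin

definition fr :: "real \<Rightarrow> real" where "fr r = r"

definition rad :: "real \<times> real \<times> real \<Rightarrow> real" where
  "rad q = (case q of (x, y, z) \<Rightarrow> sqrt (x\<^sup>2 + y\<^sup>2))"

definition Sigma_set :: "(real \<times> real \<times> real) set" where
  "Sigma_set = {q. rad q = 0}"

definition is_normal_sol ::
  "(real \<Rightarrow> real) \<Rightarrow> (real \<Rightarrow> real) \<Rightarrow> (real \<Rightarrow> real) \<Rightarrow>
   (real \<Rightarrow> real) \<Rightarrow> (real \<Rightarrow> real) \<Rightarrow> (real \<Rightarrow> real) \<Rightarrow> bool" where
  "is_normal_sol x y z u v w \<longleftrightarrow>
     (\<forall>t. (x has_real_derivative u t) (at t)
        \<and> (y has_real_derivative v t) (at t)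
        \<and> (z has_real_derivative (fr (rad (x t, y t, z t)))\<^sup>2 * w t) (at t)
        \<and> (u has_real_derivative - (w t)\<^sup>2 * x t) (at t)
        \<and> (v has_real_derivative - (w t)\<^sup>2 * y t) (at t)
        \<and> (w has_real_derivative 0) (at t))"

definition gamma ::
  "real \<times> real \<times> real \<Rightarrow> real \<times> real \<times> real \<Rightarrow> real \<Rightarrow> real \<times> real \<times> real" where
  "gamma q0 l0 t = (THE q. \<exists>x y z u v w. is_normal_sol x y z u v w
       \<and> (x 0, y 0, z 0) = q0 \<and> (u 0, v 0, w 0) = l0 \<and> q = (x t, y t, z t))"

definition Exp :: "real \<times> real \<times> real \<Rightarrow> real \<times> real \<times> real \<Rightarrow> real \<times> real \<times> real" where
  "Exp q0 l0 = gamma q0 l0 1"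

definition critical_point :: "('a::euclidean_space \<Rightarrow> 'b::euclidean_space) \<Rightarrow> 'a \<Rightarrow> bool" where
  "critical_point F p \<longleftrightarrow> F differentiable (at p) \<and> \<not> surj (frechet_derivative F (at p))"

definition t_con :: "real \<times> real \<times> real \<Rightarrow> real \<times> real \<times> real \<Rightarrow> real" where
  "t_con q0 l0 = Inf {t. t > 0 \<and> critical_point (Exp q0) (t *\<^sub>R l0)}"

definition E1 :: "real \<times> real \<times> real \<Rightarrow> (real \<times> real \<times> real) set" where
  "E1 q0 = {(u0, v0, w0). u0\<^sup>2 + v0\<^sup>2 + (rad q0)\<^sup>2 * w0\<^sup>2 = 1}"

definition Kc :: "real \<times> real \<times> real \<Rightarrow> real \<times> real \<times> real \<Rightarrow> real" where
  "Kc q0 l0 = (case q0 of (x0, y0, z0) \<Rightarrow> case l0 of (u0, v0, w0) \<Rightarrow> x0 * v0 - y0 * u0)"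

definition Lc :: "real \<times> real \<times> real \<Rightarrow> real \<times> real \<times> real \<Rightarrow> real" where
  "Lc q0 l0 = (case q0 of (x0, y0, z0) \<Rightarrow> case l0 of (u0, v0, w0) \<Rightarrow> x0 * u0 + y0 * v0)"

definition E1_star :: "real \<times> real \<times> real \<Rightarrow> (real \<times> real \<times> real) set" where
  "E1_star q0 = E1 q0 - ({l. Kc q0 l = 0} \<union> {l. Lc q0 l = 0} \<union> {l. snd (snd l) = 0})"

end

theory Submission
  imports Defs
begin

text \<open>
  For \<open>w0 \<noteq> 0\<close> the normal system integrates explicitly: \<open>(x, y)\<close> oscillates harmonically with
  frequency \<open>w0\<close> and \<open>z\<close> is a primitive of \<open>w0 (x\<^sup>2 + y\<^sup>2)\<close>. Hence \<open>Exp\<close> is smooth where \<open>w \<noteq> 0\<close>,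
  and its Jacobian at \<open>(u, v, w)\<close> has the bordered shape \<open>[[S, 0, A], [0, S, B], [C, D, E]]\<close>
  with \<open>S = sin w / w\<close>. At \<open>|w| = \<pi>\<close> we get \<open>S = 0\<close>, so the Jacobian has rank at most 2.
  For \<open>0 < |w| < \<pi>\<close> the Schur complement \<open>E - (A C + B D) / S\<close> equals
  \<open>r\<^sup>2 + L + (u\<^sup>2 + v\<^sup>2) (sin w - w cos w) / (w\<^sup>2 sin w)\<close>, and since the last factor exceeds
  \<open>1/3\<close> this dominates the positive definite form \<open>r\<^sup>2 + L + (u\<^sup>2 + v\<^sup>2) / 3\<close>; so the Jacobian
  is invertible. Along the ray \<open>t \<lambda>0\<close> the \<open>w\<close>-component is \<open>t w0\<close>, so the first critical time is
  \<open>\<pi> / |w0|\<close>.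
\<close>

lemma harmonic_oscillator_zero:
  fixes p q :: "real \<Rightarrow> real"
  assumes dp: "\<And>t. (p has_real_derivative q t) (at t)"
    and dq: "\<And>t. (q has_real_derivative - W\<^sup>2 * p t) (at t)"
    and "p 0 = 0" "q 0 = 0"
  shows "p t = 0"
proof -
  define energy where "energy t = W\<^sup>2 * (p t)\<^sup>2 + (q t)\<^sup>2" for t
  have "(energy has_real_derivative 0) (at t)" for t
    unfolding energy_def[abs_def]
    by (rule derivative_eq_intros dp dq refl | simp add: algebra_simps)+
  then have "energy t = energy 0" for t
    using DERIV_isconst_all by blast
  then have "q t = 0" for t
    using assms(3,4) by (simp add: energy_def add_nonneg_eq_0_iff)
  with dp have "(p has_real_derivative 0) (at t)" for t
    by metis
  then show "p t = 0"
    using DERIV_isconst_all assms(3) by metis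
qed

definition bordered_map ::
  "real \<Rightarrow> real \<Rightarrow> real \<Rightarrow> real \<Rightarrow> real \<Rightarrow> real \<Rightarrow> real \<times> real \<times> real \<Rightarrow> real \<times> real \<times> real" where
  "bordered_map S A B C D E h =
    (S * fst h + A * snd (snd h), S * fst (snd h) + B * snd (snd h),
     C * fst h + D * fst (snd h) + E * snd (snd h))"

lemma bordered_map_zero_not_surj: "\<not> surj (bordered_map 0 A B C D E)"
proof
  assume "surj (bordered_map 0 A B C D E)"
  then obtain h1 h2 where "bordered_map 0 A B C D E h1 = (1, 0, 0)" "bordered_map 0 A B C D E h2 = (0, 1, 0)"
    by (metis surjD)
  then have "A * snd (snd h1) = 1" "B * snd (snd h1) = 0" "A * snd (snd h2) = 0" "B * snd (snd h2) = 1"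
    by (auto simp: bordered_map_def)
  then show False
    by (metis mult_eq_0_iff zero_neq_one)
qed

lemma bordered_map_surj:
  assumes S: "S \<noteq> 0" and schur: "E - (A * C + B * D) / S \<noteq> 0"
  shows "surj (bordered_map S A B C D E)"
proof -
  have "(p, r, s) \<in> range (bordered_map S A B C D E)" for p r s
  proof
    define \<Delta> where "\<Delta> = E - (A * C + B * D) / S"
    define h3 where "h3 = (s - (C * p + D * r) / S) / \<Delta>"
    have "C * ((p - A * h3) / S) + D * ((r - B * h3) / S) + E * h3 = (C * p + D * r) / S + \<Delta> * h3"
      using S by (simp add: \<Delta>_def field_simps)
    also have "\<dots> = s"
      using schur by (simp add: \<Delta>_def h3_def)
    finally show "(p, r, s) = bordered_map S A B C D E ((p - A * h3) / S, (r - B * h3) / S, h3)"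
      using S unfolding bordered_map_def by simp
  qed simp
  then show ?thesis
    by auto
qed

lemma sin_sub_mult_cos_pos:
  assumes "0 < x" "x < pi"
  shows "0 < sin x - x * cos x"
proof -
  have "((\<lambda>y. sin y - y * cos y) has_real_derivative y * sin y) (at y)" for y
    by (rule derivative_eq_intros refl | simp)+
  then obtain z where z: "0 < z" "z < x" "sin x - x * cos x = x * (z * sin z)"
    using MVT2[OF assms(1), of "\<lambda>y. sin y - y * cos y"] by force
  moreover have "0 < sin z"
    using z assms by (intro sin_gt_zero) auto
  ultimately show ?thesis
    using assms by simp
qed

lemma sin_sub_mult_cos_gt:
  assumes "0 < x" "x < pi"
  shows "x\<^sup>2 * sin x / 3 < sin x - x * cos x"
proof -
  have "((\<lambda>y. sin y - y * cos y - y\<^sup>2 * sin y / 3) has_real_derivative y * (sin y - y * cos y) / 3) (at y)" for y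
    by (rule derivative_eq_intros refl | simp add: field_simps power2_eq_square)+
  then obtain z where z: "0 < z" "z < x"
      "sin x - x * cos x - x\<^sup>2 * sin x / 3 = x * (z * (sin z - z * cos z) / 3)"
    using MVT2[OF assms(1), of "\<lambda>y. sin y - y * cos y - y\<^sup>2 * sin y / 3"] by force
  moreover have "0 < sin z - z * cos z"
    using z assms by (intro sin_sub_mult_cos_pos) auto
  then have "0 < x * (z * (sin z - z * cos z) / 3)"
    using z assms by simp
  ultimately show ?thesis
    by linarith
qed

lemma sin_sub_mult_cos_div_gt:
  assumes "0 < \<bar>w\<bar>" "\<bar>w\<bar> < pi"
  shows "1 / 3 < (sin w - w * cos w) / (w\<^sup>2 * sin w)"
proof -
  have "1 / 3 < (sin \<bar>w\<bar> - \<bar>w\<bar> * cos \<bar>w\<bar>) / (\<bar>w\<bar>\<^sup>2 * sin \<bar>w\<bar>)"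
    using sin_sub_mult_cos_gt[OF assms] sin_gt_zero[OF assms(1)] assms by (simp add: field_simps)
  moreover have "(sin \<bar>w\<bar> - \<bar>w\<bar> * cos \<bar>w\<bar>) / (\<bar>w\<bar>\<^sup>2 * sin \<bar>w\<bar>) = (sin w - w * cos w) / (w\<^sup>2 * sin w)"
    by (cases "0 \<le> w") (simp_all add: minus_divide_left)
  ultimately show ?thesis
    by linarith
qed

lemma sum_squares_add_inner_pos:
  fixes x0 y0 u v :: real
  assumes "0 < x0\<^sup>2 + y0\<^sup>2"
  shows "0 < (x0\<^sup>2 + y0\<^sup>2) + (x0 * u + y0 * v) + (u\<^sup>2 + v\<^sup>2) / 3"
proof -
  have "(x0\<^sup>2 + y0\<^sup>2) + (x0 * u + y0 * v) + (u\<^sup>2 + v\<^sup>2) / 3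
      = (x0 + u / 2)\<^sup>2 + (y0 + v / 2)\<^sup>2 + (u\<^sup>2 + v\<^sup>2) / 12"
    by (simp add: power2_eq_square field_simps)
  moreover have "0 < (x0 + u / 2)\<^sup>2 + (y0 + v / 2)\<^sup>2 + (u\<^sup>2 + v\<^sup>2) / 12"
  proof (cases "u = 0 \<and> v = 0")
    case False
    then have "0 < u\<^sup>2 + v\<^sup>2"
      by (simp add: sum_power2_gt_zero_iff)
    then show ?thesis
      by (simp add: add_nonneg_pos)
  qed (use assms in simp)
  ultimately show ?thesis
    by simp
qed

lemma is_normal_sol_unique:
  assumes sol: "is_normal_sol x y z u v w" and sol': "is_normal_sol x' y' z' u' v' w'"
    and "x 0 = x' 0" "y 0 = y' 0" "z 0 = z' 0" "u 0 = u' 0" "v 0 = v' 0" "w 0 = w' 0"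
  shows "(x t, y t, z t) = (x' t, y' t, z' t)"
proof -
  have dx: "(x has_real_derivative u s) (at s)" "(x' has_real_derivative u' s) (at s)"
    and dy: "(y has_real_derivative v s) (at s)" "(y' has_real_derivative v' s) (at s)"
    and dz: "(z has_real_derivative (fr (rad (x s, y s, z s)))\<^sup>2 * w s) (at s)"
      "(z' has_real_derivative (fr (rad (x' s, y' s, z' s)))\<^sup>2 * w' s) (at s)"
    and du: "(u has_real_derivative - (w s)\<^sup>2 * x s) (at s)"
      "(u' has_real_derivative - (w' s)\<^sup>2 * x' s) (at s)"
    and dv: "(v has_real_derivative - (w s)\<^sup>2 * y s) (at s)"
      "(v' has_real_derivative - (w' s)\<^sup>2 * y' s) (at s)"
    and dw: "(w has_real_derivative 0) (at s)" "(w' has_real_derivative 0) (at s)" for s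
    using sol sol' unfolding is_normal_sol_def by auto
  define W where "W = w 0"
  have w: "w s = W" "w' s = W" for s
    using DERIV_isconst_all dw assms(8) unfolding W_def by metis+
  have "x s - x' s = 0" for s
  proof (rule harmonic_oscillator_zero[where p = "\<lambda>t. x t - x' t" and q = "\<lambda>t. u t - u' t"])
    show "((\<lambda>t. x t - x' t) has_real_derivative u s - u' s) (at s)" for s
      using dx by (rule DERIV_diff)
    show "((\<lambda>t. u t - u' t) has_real_derivative - W\<^sup>2 * (x s - x' s)) (at s)" for s
      using DERIV_diff[OF du] w by (simp add: algebra_simps)
  qed (use assms in auto)
  moreover have "y s - y' s = 0" for s
  proof (rule harmonic_oscillator_zero[where p = "\<lambda>t. y t - y' t" and q = "\<lambda>t. v t - v' t"])
    show "((\<lambda>t. y t - y' t) has_real_derivative v s - v' s) (at s)" for s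
      using dy by (rule DERIV_diff)
    show "((\<lambda>t. v t - v' t) has_real_derivative - W\<^sup>2 * (y s - y' s)) (at s)" for s
      using DERIV_diff[OF dv] w by (simp add: algebra_simps)
  qed (use assms in auto)
  ultimately have "((\<lambda>t. z t - z' t) has_real_derivative 0) (at s)" for s
    using DERIV_diff[OF dz] w by (simp add: rad_def fr_def)
  then have "z t - z' t = z 0 - z' 0"
    using DERIV_isconst_all by blast
  with \<open>x t - x' t = 0\<close> \<open>y t - y' t = 0\<close> show ?thesis
    using assms by simp
qed

definition osc :: "real \<Rightarrow> real \<Rightarrow> real \<Rightarrow> real \<Rightarrow> real" where
  "osc x0 u w t = x0 * cos (w * t) + u * sin (w * t) / w"

definition osc_vel :: "real \<Rightarrow> real \<Rightarrow> real \<Rightarrow> real \<Rightarrow> real" where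
  "osc_vel x0 u w t = u * cos (w * t) - x0 * w * sin (w * t)"

text \<open>The primitive of \<open>w * ((osc x0 u w t)\<^sup>2 + (osc y0 v w t)\<^sup>2)\<close> with value \<open>z0\<close> at \<open>t = 0\<close>.\<close>
definition vertical :: "real \<Rightarrow> real \<Rightarrow> real \<Rightarrow> real \<Rightarrow> real \<Rightarrow> real \<Rightarrow> real \<Rightarrow> real" where
  "vertical x0 y0 z0 u v w t = z0
     + (x0\<^sup>2 + y0\<^sup>2) * (w * t + sin (w * t) * cos (w * t)) / 2
     + (x0 * u + y0 * v) * (sin (w * t))\<^sup>2 / w
     + (u\<^sup>2 + v\<^sup>2) * (w * t - sin (w * t) * cos (w * t)) / (2 * w\<^sup>2)"

lemma osc_has_derivative:
  "w \<noteq> 0 \<Longrightarrow> (osc x0 u w has_real_derivative osc_vel x0 u w t) (at t)"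
  unfolding osc_def[abs_def] osc_vel_def
  by (auto intro!: derivative_eq_intros simp: field_simps)

lemma osc_vel_has_derivative:
  "(osc_vel x0 u w has_real_derivative - w\<^sup>2 * osc x0 u w t) (at t)" if "w \<noteq> 0"
  unfolding osc_def osc_vel_def[abs_def] using that
  by (auto intro!: derivative_eq_intros simp: field_simps power2_eq_square)

lemma vertical_has_derivative:
  assumes "w \<noteq> 0"
  shows "(vertical x0 y0 z0 u v w has_real_derivative
    w * ((osc x0 u w t)\<^sup>2 + (osc y0 v w t)\<^sup>2)) (at t)"
proof -
  define s c where "s = sin (w * t)" and "c = cos (w * t)"
  have "(vertical x0 y0 z0 u v w has_real_derivative
      (x0\<^sup>2 + y0\<^sup>2) * (w + w * (c * c - s * s)) / 2 + (x0 * u + y0 * v) * (2 * s * c * w) / w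
      + (u\<^sup>2 + v\<^sup>2) * (w - w * (c * c - s * s)) / (2 * w\<^sup>2)) (at t)"
    unfolding vertical_def[abs_def] s_def c_def using assms
    by (auto intro!: derivative_eq_intros simp: field_simps power2_eq_square)
  moreover have "c\<^sup>2 + s\<^sup>2 = 1"
    by (simp add: s_def c_def)
  then have "(x0\<^sup>2 + y0\<^sup>2) * (w + w * (c * c - s * s)) / 2 + (x0 * u + y0 * v) * (2 * s * c * w) / w
      + (u\<^sup>2 + v\<^sup>2) * (w - w * (c * c - s * s)) / (2 * w\<^sup>2)
    = w * ((x0 * c + u * s / w)\<^sup>2 + (y0 * c + v * s / w)\<^sup>2)"
    using assms by (simp add: field_simps power2_eq_square) algebra
  ultimately show ?thesis
    by (simp add: osc_def s_def c_def)
qed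

lemma is_normal_sol_explicit:
  assumes "w \<noteq> 0"
  shows "is_normal_sol (osc x0 u w) (osc y0 v w) (vertical x0 y0 z0 u v w)
    (osc_vel x0 u w) (osc_vel y0 v w) (\<lambda>_. w)"
  using osc_has_derivative osc_vel_has_derivative vertical_has_derivative assms
  by (simp add: is_normal_sol_def fr_def rad_def mult.commute)

lemma gamma_explicit:
  assumes "w \<noteq> 0"
  shows "gamma (x0, y0, z0) (u, v, w) t = (osc x0 u w t, osc y0 v w t, vertical x0 y0 z0 u v w t)"
  unfolding gamma_def
proof (rule the_equality)
  show "\<exists>x y z u' v' w'. is_normal_sol x y z u' v' w' \<and> (x 0, y 0, z 0) = (x0, y0, z0)
      \<and> (u' 0, v' 0, w' 0) = (u, v, w) \<and> (osc x0 u w t, osc y0 v w t, vertical x0 y0 z0 u v w t) = (x t, y t, z t)"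
    using is_normal_sol_explicit[OF assms] by (fastforce simp: osc_def osc_vel_def vertical_def)
next
  fix q
  assume "\<exists>x y z u' v' w'. is_normal_sol x y z u' v' w' \<and> (x 0, y 0, z 0) = (x0, y0, z0)
      \<and> (u' 0, v' 0, w' 0) = (u, v, w) \<and> q = (x t, y t, z t)"
  then show "q = (osc x0 u w t, osc y0 v w t, vertical x0 y0 z0 u v w t)"
    using is_normal_sol_unique[OF _ is_normal_sol_explicit[OF assms]]
    by (fastforce simp: osc_def osc_vel_def vertical_def)
qed

definition osc_du :: "real \<Rightarrow> real" where
  "osc_du w = sin w / w"

definition osc_dw :: "real \<Rightarrow> real \<Rightarrow> real \<Rightarrow> real" where
  "osc_dw x0 u w = - x0 * sin w + u * (w * cos w - sin w) / w\<^sup>2"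

definition vertical_du :: "real \<Rightarrow> real \<Rightarrow> real \<Rightarrow> real" where
  "vertical_du x0 u w = x0 * (sin w)\<^sup>2 / w + u * (w - sin w * cos w) / w\<^sup>2"

definition vertical_dw :: "real \<Rightarrow> real \<Rightarrow> real \<Rightarrow> real \<Rightarrow> real \<Rightarrow> real" where
  "vertical_dw x0 y0 u v w = (x0\<^sup>2 + y0\<^sup>2) * (cos w)\<^sup>2
    + (x0 * u + y0 * v) * (2 * w * sin w * cos w - (sin w)\<^sup>2) / w\<^sup>2
    + (u\<^sup>2 + v\<^sup>2) * cos w * (sin w - w * cos w) / w ^ 3"

lemma Exp_explicit_has_derivative:
  assumes "w \<noteq> 0"
  shows "((\<lambda>(u, v, w). (osc x0 u w 1, osc y0 v w 1, vertical x0 y0 z0 u v w 1)) has_derivative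
    bordered_map (osc_du w) (osc_dw x0 u w) (osc_dw y0 v w)
      (vertical_du x0 u w) (vertical_du y0 v w) (vertical_dw x0 y0 u v w)) (at (u, v, w))"
proof -
  have trig: "(sin w)\<^sup>2 + (cos w)\<^sup>2 = 1"
    by simp
  show ?thesis
    unfolding osc_def vertical_def bordered_map_def osc_du_def osc_dw_def vertical_du_def vertical_dw_def
      split_beta'
    using assms by (auto intro!: derivative_eq_intros simp: fun_eq_iff field_simps power2_eq_square) (use trig in algebra)
qed

lemma Exp_has_derivative:
  assumes "w \<noteq> 0"
  shows "(Exp (x0, y0, z0) has_derivative
    bordered_map (osc_du w) (osc_dw x0 u w) (osc_dw y0 v w)
      (vertical_du x0 u w) (vertical_du y0 v w) (vertical_dw x0 y0 u v w)) (at (u, v, w))"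
proof (rule has_derivative_transform_within_open[OF Exp_explicit_has_derivative[OF assms]])
  show "open {l :: real \<times> real \<times> real. snd (snd l) \<noteq> 0}"
    by (intro open_Collect_neq continuous_intros)
  show "(u, v, w) \<in> {l. snd (snd l) \<noteq> 0}"
    using assms by simp
qed (auto simp: Exp_def gamma_explicit)

lemma critical_point_Exp_iff:
  assumes "w \<noteq> 0"
  shows "critical_point (Exp (x0, y0, z0)) (u, v, w) \<longleftrightarrow>
    \<not> surj (bordered_map (osc_du w) (osc_dw x0 u w) (osc_dw y0 v w)
      (vertical_du x0 u w) (vertical_du y0 v w) (vertical_dw x0 y0 u v w))"
proof -
  note d = Exp_has_derivative[OF assms, of x0 y0 z0 u v]
  then have "Exp (x0, y0, z0) differentiable (at (u, v, w))"
    by (auto simp: differentiable_def)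
  with frechet_derivative_at[OF d] show ?thesis
    by (simp add: critical_point_def)
qed

lemma Exp_schur_complement:
  assumes "w \<noteq> 0" "sin w \<noteq> 0"
  shows "vertical_dw x0 y0 u v w - (osc_dw x0 u w * vertical_du x0 u w + osc_dw y0 v w * vertical_du y0 v w) / osc_du w
    = (x0\<^sup>2 + y0\<^sup>2) + (x0 * u + y0 * v) + (u\<^sup>2 + v\<^sup>2) * (sin w - w * cos w) / (w\<^sup>2 * sin w)"
proof -
  have trig: "(sin w)\<^sup>2 + (cos w)\<^sup>2 = 1"
    by simp
  show ?thesis
    unfolding vertical_dw_def osc_dw_def vertical_du_def osc_du_def using assms
    by (simp add: field_simps power2_eq_square power3_eq_cube) (use trig in algebra)
qed

lemma Exp_schur_complement_pos:
  assumes "0 < x0\<^sup>2 + y0\<^sup>2" "0 < \<bar>w\<bar>" "\<bar>w\<bar> < pi"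
  shows "0 < vertical_dw x0 y0 u v w
    - (osc_dw x0 u w * vertical_du x0 u w + osc_dw y0 v w * vertical_du y0 v w) / osc_du w"
proof -
  have "sin w \<noteq> 0"
    using sin_sub_mult_cos_div_gt[OF assms(2,3)] by auto
  with assms(2) have "vertical_dw x0 y0 u v w
      - (osc_dw x0 u w * vertical_du x0 u w + osc_dw y0 v w * vertical_du y0 v w) / osc_du w
    = (x0\<^sup>2 + y0\<^sup>2) + (x0 * u + y0 * v) + (u\<^sup>2 + v\<^sup>2) * (sin w - w * cos w) / (w\<^sup>2 * sin w)"
    by (intro Exp_schur_complement) auto
  moreover have "(u\<^sup>2 + v\<^sup>2) / 3 \<le> (u\<^sup>2 + v\<^sup>2) * (sin w - w * cos w) / (w\<^sup>2 * sin w)"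
    using mult_left_mono[OF less_imp_le[OF sin_sub_mult_cos_div_gt[OF assms(2,3)]], of "u\<^sup>2 + v\<^sup>2"]
    by simp
  ultimately show ?thesis
    using sum_squares_add_inner_pos[OF assms(1), of u v] by linarith
qed

lemma critical_point_Exp_iff_abs_eq_pi:
  assumes "0 < x0\<^sup>2 + y0\<^sup>2" "0 < \<bar>w\<bar>" "\<bar>w\<bar> \<le> pi"
  shows "critical_point (Exp (x0, y0, z0)) (u, v, w) \<longleftrightarrow> \<bar>w\<bar> = pi"
proof (cases "\<bar>w\<bar> = pi")
  case True
  then have "w = pi \<or> w = - pi"
    by linarith
  then have "osc_du w = 0"
    by (auto simp: osc_du_def)
  with assms(2) have "critical_point (Exp (x0, y0, z0)) (u, v, w)"
    using critical_point_Exp_iff bordered_map_zero_not_surj by (metis zero_less_abs_iff)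
  with True show ?thesis
    by simp
next
  case False
  with assms have "\<bar>w\<bar> < pi"
    by simp
  then have "sin w \<noteq> 0"
    using assms(2) sin_eq_0_pi by fastforce
  with assms(2) have "osc_du w \<noteq> 0"
    by (simp add: osc_du_def)
  then have "surj (bordered_map (osc_du w) (osc_dw x0 u w) (osc_dw y0 v w)
      (vertical_du x0 u w) (vertical_du y0 v w) (vertical_dw x0 y0 u v w))"
    using Exp_schur_complement_pos[OF assms(1,2) \<open>\<bar>w\<bar> < pi\<close>, of u v]
    by (intro bordered_map_surj) auto
  with False assms(2) show ?thesis
    by (simp add: critical_point_Exp_iff)
qed

theorem corollary12:
  fixes q0 l0 :: "real \<times> real \<times> real"
  assumes "q0 \<notin> Sigma_set"
    and "l0 \<in> E1_star q0"
  shows "t_con q0 l0 = pi / \<bar>snd (snd l0)\<bar>"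
proof -
  obtain x0 y0 z0 u0 v0 w0 where q0: "q0 = (x0, y0, z0)" and l0: "l0 = (u0, v0, w0)"
    by (cases q0, cases l0) auto
  have r: "0 < x0\<^sup>2 + y0\<^sup>2"
    using assms(1) by (simp add: q0 Sigma_set_def rad_def sum_power2_gt_zero_iff)
  have w0: "w0 \<noteq> 0"
    using assms(2) by (simp add: l0 E1_star_def)
  define t1 where "t1 = pi / \<bar>w0\<bar>"
  have critical_iff: "critical_point (Exp q0) (t *\<^sub>R l0) \<longleftrightarrow> t = t1" if "0 < t" "t \<le> t1" for t
  proof -
    have "\<bar>t * w0\<bar> = t * \<bar>w0\<bar>"
      using that by (simp add: abs_mult)
    moreover have "t * \<bar>w0\<bar> \<le> pi \<and> (t * \<bar>w0\<bar> = pi \<longleftrightarrow> t = t1)"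
      using that w0 by (auto simp: t1_def field_simps)
    ultimately show ?thesis
      using critical_point_Exp_iff_abs_eq_pi[OF r, of "t * w0"] that w0 by (simp add: q0 l0)
  qed
  have "0 < t1"
    using w0 by (simp add: t1_def)
  moreover have "t1 \<le> t" if "0 < t" "critical_point (Exp q0) (t *\<^sub>R l0)" for t
    using critical_iff[OF that(1)] that(2) by (cases "t \<le> t1") auto
  ultimately have "Inf {t. 0 < t \<and> critical_point (Exp q0) (t *\<^sub>R l0)} = t1"
    using critical_iff by (intro cInf_eq_minimum) auto
  then show ?thesis
    by (simp add: t_con_def t1_def l0)
qed

end
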